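(* Let $p$ be a prime and let $A$ and $B$ be nontrivial finite $p$-groups. Define $A_0=A$ and $A_n=A_{n-1}\wr\mathbb{Z}/p\mathbb{Z}$ for $n\ge1$. Then $\psi(A_n,B)\to 0$ as $n\to\infty$.
   Context: For a finite group $G$, the average order is $a(G)=\frac{1}{|G|}\sum_{g\in G}\mathrm{order}(g)$ and $m(G)$ denotes the maximum order of an element of $G$. For $p$-groups $A,B$, $\psi(A,B)=\frac{a(A\wr B)}{m(A)\,a(B)}$. For groups $A,B$, let $K=\prod_{b\in B}A$, on which $B$ acts by $x\cdot(\alpha_b)_b=(\alpha_{x^{-1}b})_b$ for $x\in B$; the wreath product $A\wr B$ is the semidirect product $K\rtimes B$ for this action. *)

theory Defs
  imports "HOL-Computational_Algebra.Primes" "HOL-Algebra.Multiplicative_Group" "HOL-Algebra.Elementary_Groups" Complex_Main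
begin

definition avg_order :: "('a, 'c) monoid_scheme \<Rightarrow> real" where
  "avg_order G = (\<Sum>g\<in>carrier G. real (group.ord G g)) / real (card (carrier G))"

definition max_order :: "('a, 'c) monoid_scheme \<Rightarrow> nat" where
  "max_order G = Max (group.ord G ` carrier G)"

text \<open>Wreath product A wr B = K \<rtimes> B with K = functions carrier B \<rightarrow> carrier A,
  B acting by (x . alpha)(b) = alpha (x^{-1} b). Product (k,x)(k',y) = (k (x.k'), x y).\<close>

definition wreath :: "('a, 'c) monoid_scheme \<Rightarrow> ('b, 'd) monoid_scheme \<Rightarrow> (('b \<Rightarrow> 'a) \<times> 'b) monoid" where
  "wreath A B = \<lparr> carrier = {(f, x). f \<in> carrier B \<rightarrow>\<^sub>E carrier A \<and> x \<in> carrier B},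
     mult = (\<lambda>(f, x) (g, y). (\<lambda>c\<in>carrier B. f c \<otimes>\<^bsub>A\<^esub> g (inv\<^bsub>B\<^esub> x \<otimes>\<^bsub>B\<^esub> c), x \<otimes>\<^bsub>B\<^esub> y)),
     one = (\<lambda>c\<in>carrier B. \<one>\<^bsub>A\<^esub>, \<one>\<^bsub>B\<^esub>) \<rparr>"

definition psi :: "('a, 'c) monoid_scheme \<Rightarrow> ('b, 'd) monoid_scheme \<Rightarrow> real" where
  "psi A B = avg_order (wreath A B) / (real (max_order A) * avg_order B)"

text \<open>Transport of a group structure along an injective map (an isomorphic copy).
  Used to give all iterated wreath products A_n a common element type.\<close>

definition transport :: "('x \<Rightarrow> 'y) \<Rightarrow> ('x, 'c) monoid_scheme \<Rightarrow> 'y monoid" where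
  "transport h G = \<lparr> carrier = h ` carrier G,
     mult = (\<lambda>u v. h (the_inv_into (carrier G) h u \<otimes>\<^bsub>G\<^esub> the_inv_into (carrier G) h v)),
     one = h \<one>\<^bsub>G\<^esub> \<rparr>"

datatype 'a itwr = Base 'a | Node "int \<Rightarrow> 'a itwr" int

fun iter_wreath :: "('a, 'c) monoid_scheme \<Rightarrow> nat \<Rightarrow> nat \<Rightarrow> 'a itwr monoid" where
  "iter_wreath A p 0 = transport Base A"
| "iter_wreath A p (Suc n) =
     transport (\<lambda>(f, k). Node f k) (wreath (iter_wreath A p n) (integer_mod_group p))"

end

(*
  Let F be the base component of (f, x)^(ord x) in A wr B.  If the element orders of A form a
  divisibility chain, as they do in a p-group, then ord (f, x) <= ord x * max_c ord (F c); since
  ord (F c) is constant along the orbits of x, this gives ord (f, x)^2 <= ord x * sum_c ord (F c)^2.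
  As f varies, F c is equidistributed over A, so the mean square element order satisfies
  E[ord^2](A wr B) <= (sum_{x in B} ord x) * E[ord^2](A) = |B| a(B) E[ord^2](A).  Together with
  a(A wr B)^2 <= E[ord^2](A wr B) (Cauchy-Schwarz) and a(B) >= 1 this yields
  psi(A, B)^2 <= |B| E[ord^2](A) / m(A)^2.  Passing from A_n to A_n wr Z/p multiplies E[ord^2]
  by at most 1 + (p - 1) p, the sum of the element orders of Z/p, and the maximal order by at
  least p, so E[ord^2](A_n) / m(A_n)^2 <= ((1 + (p - 1) p) / p^2)^n.
*)

theory Submission
  imports Defs
begin

section \<open>Element orders\<close>

lemma (in group) pow_mult_swap:
  assumes u: "u \<in> carrier G" and v: "v \<in> carrier G"
  shows "(v \<otimes> u) [^] (n::nat) = inv u \<otimes> (u \<otimes> v) [^] n \<otimes> u"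
proof (induction n)
  case 0
  show ?case using u by simp
next
  case (Suc n)
  have "(v \<otimes> u) [^] Suc n = inv u \<otimes> (u \<otimes> v) [^] n \<otimes> (u \<otimes> v) \<otimes> u"
    using Suc u v by (simp add: m_assoc)
  then show ?case using u v by (simp add: m_assoc)
qed

lemma (in group) ord_mult_swap:
  assumes u: "u \<in> carrier G" and v: "v \<in> carrier G"
  shows "ord (u \<otimes> v) = ord (v \<otimes> u)"
proof -
  have "(v \<otimes> u) [^] n = \<one> \<longleftrightarrow> (u \<otimes> v) [^] n = \<one>" for n :: nat
    using u v by (simp add: pow_mult_swap[OF u v] m_assoc inv_solve_left')
  then show ?thesis
    using u v by (metis pow_eq_id m_closed dvd_antisym dvd_refl)
qed

lemma (in group) inv_nat_pow_Suc_mult: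
  "x \<in> carrier G \<Longrightarrow> c \<in> carrier G \<Longrightarrow> inv (x [^] Suc n) \<otimes> c = inv (x [^] n) \<otimes> (inv x \<otimes> c)"
  by (metis inv_mult_group m_assoc nat_pow_Suc2 nat_pow_closed inv_closed)

lemma (in group) ord_mult_le_sum_of_invariant:
  fixes \<phi> :: "'a \<Rightarrow> nat"
  assumes fin: "finite (carrier G)" and x: "x \<in> carrier G" and c: "c \<in> carrier G"
    and invariant: "\<And>d. d \<in> carrier G \<Longrightarrow> \<phi> (x \<otimes> d) = \<phi> d"
  shows "ord x * \<phi> c \<le> (\<Sum>d\<in>carrier G. \<phi> d)"
proof -
  let ?orbit = "(\<lambda>i. x [^] i \<otimes> c) ` {..<ord x}"
  have const: "\<phi> (x [^] i \<otimes> c) = \<phi> c" for i :: nat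
  proof (induction i)
    case (Suc i)
    have "x [^] Suc i \<otimes> c = x \<otimes> (x [^] i \<otimes> c)"
      using x c by (metis nat_pow_Suc2 m_assoc nat_pow_closed)
    then show ?case using Suc invariant x c by simp
  qed (use c in simp)
  have "inj_on (\<lambda>i. x [^] i) {..<ord x}"
    by (rule inj_on_subset[OF ord_inj[OF x]]) auto
  then have inj: "inj_on (\<lambda>i. x [^] i \<otimes> c) {..<ord x}"
    using x c by (auto simp: inj_on_def)
  have "ord x * \<phi> c = (\<Sum>d\<in>?orbit. \<phi> d)"
    by (simp add: sum.reindex[OF inj] const)
  also have "\<dots> \<le> (\<Sum>d\<in>carrier G. \<phi> d)"
    by (rule sum_mono2[OF fin]) (use x c in auto)
  finally show ?thesis .
qed

lemma (in group) sum_ord_le: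
  assumes fin: "finite (carrier G)"
  shows "(\<Sum>x\<in>carrier G. ord x) \<le> 1 + (card (carrier G) - 1) * card (carrier G)"
proof -
  have "(\<Sum>x\<in>carrier G. ord x) = ord \<one> + (\<Sum>x\<in>carrier G - {\<one>}. ord x)"
    by (rule sum.remove[OF fin one_closed])
  also have "\<dots> \<le> 1 + (\<Sum>x\<in>carrier G - {\<one>}. card (carrier G))"
    using ord_le_group_order[OF fin] by (intro add_mono sum_mono) (auto simp: order_def)
  also have "\<dots> = 1 + (card (carrier G) - 1) * card (carrier G)"
    using fin by (simp add: card_Diff_singleton)
  finally show ?thesis .
qed

definition orders_dvd_chain :: "('a, 'c) monoid_scheme \<Rightarrow> bool" where
  "orders_dvd_chain G \<longleftrightarrow> (\<forall>a\<in>carrier G. \<forall>b\<in>carrier G.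
     group.ord G a \<le> group.ord G b \<longrightarrow> group.ord G a dvd group.ord G b)"

lemma (in group) orders_dvd_chain_if_card_prime_power:
  assumes p: "prime p" and card: "card (carrier G) = p ^ k"
  shows "orders_dvd_chain G"
  unfolding orders_dvd_chain_def
proof (intro ballI impI)
  fix a b assume a: "a \<in> carrier G" and b: "b \<in> carrier G" and le: "ord a \<le> ord b"
  obtain i where i: "ord a = p ^ i"
    using ord_dvd_group_order[OF a] card divides_primepow_nat[OF p] by (auto simp: order_def)
  obtain j where j: "ord b = p ^ j"
    using ord_dvd_group_order[OF b] card divides_primepow_nat[OF p] by (auto simp: order_def)
  have "i \<le> j"
    using power_le_imp_le_exp[OF prime_gt_1_nat[OF p], of i j] le i j by simp
  then show "ord a dvd ord b"
    using i j by (simp add: le_imp_power_dvd)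
qed

lemma ord_integer_mod_group_1:
  assumes "n \<noteq> 1"
  shows "group.ord (integer_mod_group n) 1 = n"
proof -
  interpret Z: group "integer_mod_group n" by simp
  have "1 [^]\<^bsub>integer_mod_group n\<^esub> m = \<one>\<^bsub>integer_mod_group n\<^esub> \<longleftrightarrow> n dvd m" for m :: nat
    by (simp add: mod_eq_0_iff_dvd)
  then show ?thesis
    using Z.ord_unique assms by simp
qed

lemma (in group) ord_le_max_order:
  "finite (carrier G) \<Longrightarrow> g \<in> carrier G \<Longrightarrow> ord g \<le> max_order G"
  by (simp add: max_order_def)

lemma (in group) max_order_attained:
  assumes "finite (carrier G)"
  shows "\<exists>g\<in>carrier G. ord g = max_order G"
proof -
  have "max_order G \<in> ord ` carrier G"
    unfolding max_order_def using assms by (intro Max_in) auto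
  then show ?thesis
    by (metis imageE)
qed

lemma (in group) max_order_pos: "finite (carrier G) \<Longrightarrow> 0 < max_order G"
  using ord_le_max_order[OF _ one_closed] by simp

lemma (in group) avg_order_ge_1:
  assumes fin: "finite (carrier G)"
  shows "1 \<le> avg_order G"
proof -
  have "real (card (carrier G)) \<le> (\<Sum>g\<in>carrier G. real (ord g))"
    using sum_mono[of "carrier G" "\<lambda>_. 1::real" "\<lambda>g. real (ord g)"] ord_ge_1[OF fin] by simp
  moreover have "0 < card (carrier G)"
    using fin by (auto simp: card_gt_0_iff)
  ultimately show ?thesis
    by (simp add: avg_order_def)
qed

definition mean_sq_order :: "('a, 'c) monoid_scheme \<Rightarrow> real" where
  "mean_sq_order G = (\<Sum>g\<in>carrier G. real (group.ord G g) ^ 2) / real (card (carrier G))"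

lemma mean_sq_order_nonneg: "0 \<le> mean_sq_order G"
  by (simp add: mean_sq_order_def sum_nonneg)

lemma (in group) mean_sq_order_le_max_order:
  assumes fin: "finite (carrier G)"
  shows "mean_sq_order G \<le> real (max_order G) ^ 2"
proof -
  have "(\<Sum>g\<in>carrier G. real (ord g) ^ 2) \<le> real (card (carrier G)) * real (max_order G) ^ 2"
    using sum_mono[of "carrier G" "\<lambda>g. real (ord g) ^ 2" "\<lambda>_. real (max_order G) ^ 2"]
      ord_le_max_order[OF fin] by (simp add: power_mono)
  moreover have "0 < card (carrier G)"
    using fin by (auto simp: card_gt_0_iff)
  ultimately show ?thesis
    by (simp add: mean_sq_order_def field_simps)
qed

lemma square_sum_le_card_mult_sum_squares:
  fixes x :: "'a \<Rightarrow> real"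
  assumes "finite I"
  shows "(\<Sum>i\<in>I. x i) ^ 2 \<le> real (card I) * (\<Sum>i\<in>I. x i ^ 2)"
proof (cases "I = {}")
  case False
  define n where "n = real (card I)"
  define s where "s = (\<Sum>i\<in>I. x i)"
  define q where "q = (\<Sum>i\<in>I. x i ^ 2)"
  define \<mu> where "\<mu> = s / n"
  have n: "0 < n"
    using False assms by (simp add: n_def card_gt_0_iff)
  have "0 \<le> (\<Sum>i\<in>I. (x i - \<mu>) ^ 2)"
    by (simp add: sum_nonneg)
  also have "\<dots> = (\<Sum>i\<in>I. x i ^ 2 - 2 * \<mu> * x i + \<mu> ^ 2)"
    by (simp add: power2_diff algebra_simps)
  also have "\<dots> = q - 2 * \<mu> * s + n * \<mu> ^ 2"
    by (simp add: sum.distrib sum_subtractf sum_distrib_left[symmetric] q_def s_def n_def)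
  also have "\<dots> = q - s ^ 2 / n"
    using n by (simp add: \<mu>_def field_simps power2_eq_square)
  finally show ?thesis
    using n by (simp add: field_simps s_def q_def n_def)
qed simp

lemma avg_order_sq_le_mean_sq_order:
  assumes "finite (carrier G)"
  shows "avg_order G ^ 2 \<le> mean_sq_order G"
proof -
  let ?N = "real (card (carrier G))"
  have "(\<Sum>g\<in>carrier G. real (group.ord G g)) ^ 2 \<le> ?N * (\<Sum>g\<in>carrier G. real (group.ord G g) ^ 2)"
    by (rule square_sum_le_card_mult_sum_squares[OF assms])
  then show ?thesis
    unfolding avg_order_def mean_sq_order_def
    by (cases "?N = 0") (simp_all add: power_divide field_simps power2_eq_square)
qed

section \<open>Wreath products\<close>

lemma wreath_carrier: "carrier (wreath A B) = (carrier B \<rightarrow>\<^sub>E carrier A) \<times> carrier B"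
  by (auto simp: wreath_def)

lemma wreath_mult: "(f, x) \<otimes>\<^bsub>wreath A B\<^esub> (g, y) =
   (\<lambda>c\<in>carrier B. f c \<otimes>\<^bsub>A\<^esub> g (inv\<^bsub>B\<^esub> x \<otimes>\<^bsub>B\<^esub> c), x \<otimes>\<^bsub>B\<^esub> y)"
  by (simp add: wreath_def)

lemma wreath_one: "\<one>\<^bsub>wreath A B\<^esub> = (\<lambda>c\<in>carrier B. \<one>\<^bsub>A\<^esub>, \<one>\<^bsub>B\<^esub>)"
  by (simp add: wreath_def)

lemma finite_wreath:
  "finite (carrier A) \<Longrightarrow> finite (carrier B) \<Longrightarrow> finite (carrier (wreath A B))"
  by (simp add: wreath_carrier finite_PiE)

lemma card_wreath:
  assumes "finite (carrier A)" "finite (carrier B)"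
  shows "card (carrier (wreath A B)) = card (carrier A) ^ card (carrier B) * card (carrier B)"
  using assms by (simp add: wreath_carrier card_cartesian_product card_PiE)

lemma group_wreath:
  assumes A: "group A" and B: "group B"
  shows "group (wreath A B)"
proof -
  interpret A: group A by (rule A)
  interpret B: group B by (rule B)
  show ?thesis
  proof (rule groupI)
    fix u v assume "u \<in> carrier (wreath A B)" "v \<in> carrier (wreath A B)"
    then show "u \<otimes>\<^bsub>wreath A B\<^esub> v \<in> carrier (wreath A B)"
      by (cases u, cases v) (auto simp: wreath_carrier wreath_mult PiE_iff)
  next
    show "\<one>\<^bsub>wreath A B\<^esub> \<in> carrier (wreath A B)"
      by (auto simp: wreath_carrier wreath_one)
  next
    fix u v w
    assume "u \<in> carrier (wreath A B)" "v \<in> carrier (wreath A B)" "w \<in> carrier (wreath A B)"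
    then show "u \<otimes>\<^bsub>wreath A B\<^esub> v \<otimes>\<^bsub>wreath A B\<^esub> w =
        u \<otimes>\<^bsub>wreath A B\<^esub> (v \<otimes>\<^bsub>wreath A B\<^esub> w)"
      by (cases u, cases v, cases w) (auto simp: wreath_carrier wreath_mult PiE_iff
          A.m_assoc B.m_assoc B.inv_mult_group intro!: ext)
  next
    fix u assume "u \<in> carrier (wreath A B)"
    then show "\<one>\<^bsub>wreath A B\<^esub> \<otimes>\<^bsub>wreath A B\<^esub> u = u"
      by (cases u) (auto simp: wreath_carrier wreath_mult wreath_one PiE_iff extensional_def
          intro!: ext)
  next
    fix u assume u: "u \<in> carrier (wreath A B)"
    obtain f x where fx: "u = (f, x)" by (cases u)
    let ?v = "(\<lambda>c\<in>carrier B. inv\<^bsub>A\<^esub> f (x \<otimes>\<^bsub>B\<^esub> c), inv\<^bsub>B\<^esub> x)"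
    have "?v \<in> carrier (wreath A B)" "?v \<otimes>\<^bsub>wreath A B\<^esub> u = \<one>\<^bsub>wreath A B\<^esub>"
      using u by (auto simp: fx wreath_carrier wreath_mult wreath_one PiE_iff
          B.m_assoc[symmetric] intro!: ext)
    then show "\<exists>v\<in>carrier (wreath A B). v \<otimes>\<^bsub>wreath A B\<^esub> u = \<one>\<^bsub>wreath A B\<^esub>"
      by blast
  qed
qed

primrec base_pow ::
  "('a, 'c) monoid_scheme \<Rightarrow> ('b, 'd) monoid_scheme \<Rightarrow> ('b \<Rightarrow> 'a) \<Rightarrow> 'b \<Rightarrow> nat \<Rightarrow> 'b \<Rightarrow> 'a"
where
  "base_pow A B f x 0 = (\<lambda>c\<in>carrier B. \<one>\<^bsub>A\<^esub>)"
| "base_pow A B f x (Suc n) =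
     (\<lambda>c\<in>carrier B. base_pow A B f x n c \<otimes>\<^bsub>A\<^esub> f (inv\<^bsub>B\<^esub> (x [^]\<^bsub>B\<^esub> n) \<otimes>\<^bsub>B\<^esub> c))"

lemma wreath_pow: "(f, x) [^]\<^bsub>wreath A B\<^esub> n = (base_pow A B f x n, x [^]\<^bsub>B\<^esub> n)"
  by (induction n) (simp_all add: wreath_one wreath_mult restrict_def)

lemma base_pow_closed:
  assumes A: "group A" and B: "group B"
    and f: "f \<in> carrier B \<rightarrow>\<^sub>E carrier A" and x: "x \<in> carrier B"
  shows "base_pow A B f x n \<in> carrier B \<rightarrow>\<^sub>E carrier A"
proof -
  interpret A: group A by (rule A)
  interpret B: group B by (rule B)
  show ?thesis
    by (induction n) (use f x in \<open>auto simp: PiE_iff extensional_def\<close>)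
qed

lemma base_pow_Suc_left:
  assumes A: "group A" and B: "group B"
    and f: "f \<in> carrier B \<rightarrow>\<^sub>E carrier A" and x: "x \<in> carrier B" and c: "c \<in> carrier B"
  shows "base_pow A B f x (Suc n) c = f c \<otimes>\<^bsub>A\<^esub> base_pow A B f x n (inv\<^bsub>B\<^esub> x \<otimes>\<^bsub>B\<^esub> c)"
  using c
proof (induction n arbitrary: c)
  case 0
  interpret A: group A by (rule A)
  interpret B: group B by (rule B)
  show ?case using 0 f x by (auto simp: PiE_iff)
next
  case (Suc n)
  interpret A: group A by (rule A)
  interpret B: group B by (rule B)
  have closed: "base_pow A B f x m d \<in> carrier A" if "d \<in> carrier B" for m d
    using base_pow_closed[OF A B f x] that by (auto simp: PiE_iff)
  have shift: "inv\<^bsub>B\<^esub> (x [^]\<^bsub>B\<^esub> Suc n) \<otimes>\<^bsub>B\<^esub> c =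
      inv\<^bsub>B\<^esub> (x [^]\<^bsub>B\<^esub> n) \<otimes>\<^bsub>B\<^esub> (inv\<^bsub>B\<^esub> x \<otimes>\<^bsub>B\<^esub> c)"
    using x Suc.prems by (rule B.inv_nat_pow_Suc_mult)
  have "base_pow A B f x (Suc (Suc n)) c =
      base_pow A B f x (Suc n) c \<otimes>\<^bsub>A\<^esub> f (inv\<^bsub>B\<^esub> (x [^]\<^bsub>B\<^esub> Suc n) \<otimes>\<^bsub>B\<^esub> c)"
    using Suc.prems by (simp del: nat_pow_Suc base_pow.simps
        add: base_pow.simps(2)[of A B f x "Suc n"])
  also have "\<dots> = (f c \<otimes>\<^bsub>A\<^esub> base_pow A B f x n (inv\<^bsub>B\<^esub> x \<otimes>\<^bsub>B\<^esub> c)) \<otimes>\<^bsub>A\<^esub>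
      f (inv\<^bsub>B\<^esub> (x [^]\<^bsub>B\<^esub> n) \<otimes>\<^bsub>B\<^esub> (inv\<^bsub>B\<^esub> x \<otimes>\<^bsub>B\<^esub> c))"
    by (simp only: Suc.IH[OF Suc.prems] shift)
  also have "\<dots> = f c \<otimes>\<^bsub>A\<^esub> (base_pow A B f x n (inv\<^bsub>B\<^esub> x \<otimes>\<^bsub>B\<^esub> c) \<otimes>\<^bsub>A\<^esub>
      f (inv\<^bsub>B\<^esub> (x [^]\<^bsub>B\<^esub> n) \<otimes>\<^bsub>B\<^esub> (inv\<^bsub>B\<^esub> x \<otimes>\<^bsub>B\<^esub> c)))"
    by (intro A.m_assoc) (use f x Suc.prems closed in \<open>auto simp: PiE_iff\<close>)
  also have "\<dots> = f c \<otimes>\<^bsub>A\<^esub> base_pow A B f x (Suc n) (inv\<^bsub>B\<^esub> x \<otimes>\<^bsub>B\<^esub> c)"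
    using x Suc.prems by simp
  finally show ?case .
qed

lemma base_pow_one:
  assumes A: "group A" and B: "group B"
    and f: "f \<in> carrier B \<rightarrow>\<^sub>E carrier A" and c: "c \<in> carrier B"
  shows "base_pow A B f \<one>\<^bsub>B\<^esub> n c = f c [^]\<^bsub>A\<^esub> n"
proof -
  interpret A: group A by (rule A)
  interpret B: group B by (rule B)
  show ?thesis by (induction n) (use c in auto)
qed

lemma base_pow_cong:
  assumes "c \<in> carrier B"
    and "\<And>i. i < n \<Longrightarrow> g (inv\<^bsub>B\<^esub> (x [^]\<^bsub>B\<^esub> i) \<otimes>\<^bsub>B\<^esub> c) = f (inv\<^bsub>B\<^esub> (x [^]\<^bsub>B\<^esub> i) \<otimes>\<^bsub>B\<^esub> c)"
  shows "base_pow A B g x n c = base_pow A B f x n c"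
  using assms by (induction n) simp_all

lemma wreath_pow_ord_mult:
  assumes A: "group A" and B: "group B"
    and f: "f \<in> carrier B \<rightarrow>\<^sub>E carrier A" and x: "x \<in> carrier B"
  shows "(f, x) [^]\<^bsub>wreath A B\<^esub> (group.ord B x * j) =
    (\<lambda>c\<in>carrier B. base_pow A B f x (group.ord B x) c [^]\<^bsub>A\<^esub> j, \<one>\<^bsub>B\<^esub>)"
proof -
  interpret A: group A by (rule A)
  interpret B: group B by (rule B)
  interpret W: group "wreath A B" by (rule group_wreath[OF A B])
  let ?F = "base_pow A B f x (B.ord x)"
  have F: "?F \<in> carrier B \<rightarrow>\<^sub>E carrier A" by (rule base_pow_closed[OF A B f x])
  have "(f, x) [^]\<^bsub>wreath A B\<^esub> (B.ord x * j) = ((f, x) [^]\<^bsub>wreath A B\<^esub> B.ord x) [^]\<^bsub>wreath A B\<^esub> j"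
    using f x by (simp add: W.nat_pow_pow wreath_carrier)
  also have "\<dots> = (base_pow A B ?F \<one>\<^bsub>B\<^esub> j, \<one>\<^bsub>B\<^esub>)"
    using x by (simp add: wreath_pow)
  also have "base_pow A B ?F \<one>\<^bsub>B\<^esub> j = (\<lambda>c\<in>carrier B. ?F c [^]\<^bsub>A\<^esub> j)"
    by (rule PiE_ext[OF base_pow_closed[OF A B F B.one_closed]])
      (use F base_pow_one[OF A B F] in \<open>auto simp: PiE_iff\<close>)
  finally show ?thesis .
qed

section \<open>Element orders in wreath products\<close>

lemma base_pow_ord_shift:
  assumes A: "group A" and B: "group B" and finB: "finite (carrier B)"
    and f: "f \<in> carrier B \<rightarrow>\<^sub>E carrier A" and x: "x \<in> carrier B" and c: "c \<in> carrier B"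
  shows "group.ord A (base_pow A B f x (group.ord B x) (x \<otimes>\<^bsub>B\<^esub> c)) =
    group.ord A (base_pow A B f x (group.ord B x) c)"
proof -
  interpret A: group A by (rule A)
  interpret B: group B by (rule B)
  obtain q where q: "B.ord x = Suc q"
    using B.ord_ge_1[OF finB x] by (cases "B.ord x") auto
  have "x \<otimes>\<^bsub>B\<^esub> x [^]\<^bsub>B\<^esub> q = \<one>\<^bsub>B\<^esub>"
    by (metis B.nat_pow_Suc2 B.pow_ord_eq_1 q x)
  then have inv_pow: "inv\<^bsub>B\<^esub> (x [^]\<^bsub>B\<^esub> q) = x"
    using x by (simp add: B.inv_equality)
  let ?P = "base_pow A B f x q"
  have P: "?P d \<in> carrier A" if "d \<in> carrier B" for d
    using base_pow_closed[OF A B f x] that by (auto simp: PiE_iff)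
  have "inv\<^bsub>B\<^esub> x \<otimes>\<^bsub>B\<^esub> (x \<otimes>\<^bsub>B\<^esub> c) = c"
    using x c by (simp add: B.m_assoc[symmetric])
  then have "base_pow A B f x (Suc q) (x \<otimes>\<^bsub>B\<^esub> c) = f (x \<otimes>\<^bsub>B\<^esub> c) \<otimes>\<^bsub>A\<^esub> ?P c"
    using base_pow_Suc_left[OF A B f x B.m_closed[OF x c]] by (simp del: base_pow.simps)
  moreover have "base_pow A B f x (Suc q) c = ?P c \<otimes>\<^bsub>A\<^esub> f (x \<otimes>\<^bsub>B\<^esub> c)"
    using c by (simp add: inv_pow)
  moreover have "f (x \<otimes>\<^bsub>B\<^esub> c) \<in> carrier A"
    using f x c by auto
  ultimately show ?thesis
    using A.ord_mult_swap P[OF c] by (simp add: q)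
qed

lemma wreath_ord_le:
  assumes A: "group A" and B: "group B" and finB: "finite (carrier B)"
    and f: "f \<in> carrier B \<rightarrow>\<^sub>E carrier A" and x: "x \<in> carrier B" and M: "0 < M"
    and dvd: "\<And>c. c \<in> carrier B \<Longrightarrow> group.ord A (base_pow A B f x (group.ord B x) c) dvd M"
  shows "group.ord (wreath A B) (f, x) \<le> group.ord B x * M"
proof -
  interpret A: group A by (rule A)
  interpret B: group B by (rule B)
  interpret W: group "wreath A B" by (rule group_wreath[OF A B])
  let ?F = "base_pow A B f x (B.ord x)"
  have "(\<lambda>c\<in>carrier B. ?F c [^]\<^bsub>A\<^esub> M) = (\<lambda>c\<in>carrier B. \<one>\<^bsub>A\<^esub>)"
    using base_pow_closed[OF A B f x] dvd A.pow_eq_id by (intro restrict_ext) (auto simp: PiE_iff)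
  then have "(f, x) [^]\<^bsub>wreath A B\<^esub> (B.ord x * M) = \<one>\<^bsub>wreath A B\<^esub>"
    by (simp add: wreath_pow_ord_mult[OF A B f x] wreath_one)
  moreover have "0 < B.ord x * M"
    using B.ord_ge_1[OF finB x] M by simp
  ultimately show ?thesis
    using f x W.pow_eq_id by (simp add: wreath_carrier dvd_imp_le)
qed

lemma wreath_ord_sq_le:
  assumes A: "group A" and finA: "finite (carrier A)" and chain: "orders_dvd_chain A"
    and B: "group B" and finB: "finite (carrier B)"
    and f: "f \<in> carrier B \<rightarrow>\<^sub>E carrier A" and x: "x \<in> carrier B"
  shows "group.ord (wreath A B) (f, x) ^ 2 \<le>
    group.ord B x * (\<Sum>c\<in>carrier B. group.ord A (base_pow A B f x (group.ord B x) c) ^ 2)"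
proof -
  interpret A: group A by (rule A)
  interpret B: group B by (rule B)
  define F where "F = base_pow A B f x (B.ord x)"
  have F: "F c \<in> carrier A" if "c \<in> carrier B" for c
    using base_pow_closed[OF A B f x] that by (auto simp: F_def PiE_iff)
  let ?ords = "(\<lambda>c. A.ord (F c)) ` carrier B"
  have "Max ?ords \<in> ?ords"
    using finB by (intro Max_in) auto
  then obtain c0 where c0: "c0 \<in> carrier B" "A.ord (F c0) = Max ?ords"
    by auto
  (* The orders of the values of F form a chain, so they all divide their maximum M; and they are
     constant on the orbits of x, so the orbit of c0 alone contributes ord x * M^2 to the sum. *)
  define M where "M = A.ord (F c0)"
  have "A.ord (F c) dvd M" if "c \<in> carrier B" for c
  proof -
    have "A.ord (F c) \<le> M"
      using finB c0 that by (simp add: M_def)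
    then show ?thesis
      using chain F[OF that] F[OF c0(1)] unfolding orders_dvd_chain_def M_def by blast
  qed
  then have ord_le: "group.ord (wreath A B) (f, x) \<le> B.ord x * M"
    using A.ord_ge_1[OF finA F[OF c0(1)]]
    by (intro wreath_ord_le[OF A B finB f x]) (simp_all add: F_def M_def)
  have "B.ord x * M ^ 2 \<le> (\<Sum>c\<in>carrier B. A.ord (F c) ^ 2)"
    unfolding M_def
    by (rule B.ord_mult_le_sum_of_invariant[OF finB x c0(1)])
      (simp add: F_def base_pow_ord_shift[OF A B finB f x])
  then have "(B.ord x * M) ^ 2 \<le> B.ord x * (\<Sum>c\<in>carrier B. A.ord (F c) ^ 2)"
    using mult_le_mono2 by (simp add: power_mult_distrib power2_eq_square[of "B.ord x"])
  with ord_le show ?thesis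
    unfolding F_def by (meson order_trans power_mono zero_le)
qed

lemma sum_PiE_eval:
  fixes \<phi> :: "'a \<Rightarrow> nat"
  assumes finS: "finite S" and finT: "finite T" and c: "c \<in> T"
  shows "(\<Sum>g\<in>T \<rightarrow>\<^sub>E S. \<phi> (g c)) = card S ^ (card T - 1) * (\<Sum>a\<in>S. \<phi> a)"
proof -
  have fiber: "card {g \<in> T \<rightarrow>\<^sub>E S. g c = a} = card S ^ (card T - 1)" if a: "a \<in> S" for a
  proof -
    have "{g \<in> T \<rightarrow>\<^sub>E S. g c = a} = (\<Pi>\<^sub>E i\<in>T. if i = c then {a} else S)"
      using a c by (auto simp: PiE_iff extensional_def split: if_splits)
    then have "card {g \<in> T \<rightarrow>\<^sub>E S. g c = a} = (\<Prod>i\<in>T. card (if i = c then {a} else S))"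
      by (simp add: card_PiE[OF finT])
    also have "\<dots> = (\<Prod>i\<in>T - {c}. card S)"
      using prod.remove[OF finT c, of "\<lambda>i. card (if i = c then {a} else S)"] by simp
    also have "\<dots> = card S ^ (card T - 1)"
      using finT c by (simp add: card_Diff_singleton)
    finally show ?thesis .
  qed
  have "(\<Sum>g\<in>T \<rightarrow>\<^sub>E S. \<phi> (g c)) = (\<Sum>a\<in>S. \<Sum>g\<in>{g \<in> T \<rightarrow>\<^sub>E S. g c = a}. \<phi> (g c))"
    by (rule sum.group[symmetric]) (use finS finT c in \<open>auto simp: finite_PiE\<close>)
  also have "\<dots> = (\<Sum>a\<in>S. card S ^ (card T - 1) * \<phi> a)"
    by (rule sum.cong[OF refl]) (simp add: fiber)
  finally show ?thesis
    by (simp add: sum_distrib_left)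
qed

lemma sum_PiE_eval_mult_indep:
  fixes \<phi> :: "'a \<Rightarrow> nat"
  assumes A: "group A" and c: "c \<in> S"
    and Q: "\<And>f. f \<in> S \<rightarrow>\<^sub>E carrier A \<Longrightarrow> Q f \<in> carrier A"
    and Q_upd: "\<And>f a. Q (f(c := a)) = Q f"
  shows "(\<Sum>f\<in>S \<rightarrow>\<^sub>E carrier A. \<phi> (f c \<otimes>\<^bsub>A\<^esub> Q f)) = (\<Sum>f\<in>S \<rightarrow>\<^sub>E carrier A. \<phi> (f c))"
proof -
  interpret A: group A by (rule A)
  let ?K = "S \<rightarrow>\<^sub>E carrier A"
  define \<Phi> where "\<Phi> f = f(c := f c \<otimes>\<^bsub>A\<^esub> Q f)" for f
  define \<Psi> where "\<Psi> f = f(c := f c \<otimes>\<^bsub>A\<^esub> inv\<^bsub>A\<^esub> Q f)" for f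
  have "bij_betw \<Phi> ?K ?K"
    by (rule bij_betw_byWitness[where f' = \<Psi>])
      (use c Q in \<open>auto simp: \<Phi>_def \<Psi>_def Q_upd A.m_assoc PiE_iff\<close>)
  then have "(\<Sum>f\<in>?K. \<phi> (\<Phi> f c)) = (\<Sum>g\<in>?K. \<phi> (g c))"
    by (rule sum.reindex_bij_betw)
  then show ?thesis
    by (simp add: \<Phi>_def)
qed

lemma base_pow_upd_indep:
  assumes B: "group B" and finB: "finite (carrier B)" and x: "x \<in> carrier B" and c: "c \<in> carrier B"
  shows "base_pow A B (f(c := a)) x (group.ord B x - 1) (inv\<^bsub>B\<^esub> x \<otimes>\<^bsub>B\<^esub> c) =
    base_pow A B f x (group.ord B x - 1) (inv\<^bsub>B\<^esub> x \<otimes>\<^bsub>B\<^esub> c)"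
proof (rule base_pow_cong)
  interpret B: group B by (rule B)
  show "inv\<^bsub>B\<^esub> x \<otimes>\<^bsub>B\<^esub> c \<in> carrier B"
    using x c by simp
  fix i assume i: "i < B.ord x - 1"
  have "inv\<^bsub>B\<^esub> (x [^]\<^bsub>B\<^esub> i) \<otimes>\<^bsub>B\<^esub> (inv\<^bsub>B\<^esub> x \<otimes>\<^bsub>B\<^esub> c) = inv\<^bsub>B\<^esub> (x [^]\<^bsub>B\<^esub> Suc i) \<otimes>\<^bsub>B\<^esub> c"
    using x c by (rule B.inv_nat_pow_Suc_mult[symmetric])
  moreover have "x [^]\<^bsub>B\<^esub> Suc i \<noteq> \<one>\<^bsub>B\<^esub>"
    using i B.pow_eq_id[OF x, of "Suc i"] by (auto dest: dvd_imp_le)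
  ultimately have "inv\<^bsub>B\<^esub> (x [^]\<^bsub>B\<^esub> i) \<otimes>\<^bsub>B\<^esub> (inv\<^bsub>B\<^esub> x \<otimes>\<^bsub>B\<^esub> c) \<noteq> c"
    using x c by (simp del: nat_pow_Suc)
  then show "(f(c := a)) (inv\<^bsub>B\<^esub> (x [^]\<^bsub>B\<^esub> i) \<otimes>\<^bsub>B\<^esub> (inv\<^bsub>B\<^esub> x \<otimes>\<^bsub>B\<^esub> c)) =
      f (inv\<^bsub>B\<^esub> (x [^]\<^bsub>B\<^esub> i) \<otimes>\<^bsub>B\<^esub> (inv\<^bsub>B\<^esub> x \<otimes>\<^bsub>B\<^esub> c))"
    by simp
qed

lemma sum_base_pow_eval:
  fixes \<phi> :: "'a \<Rightarrow> nat"
  assumes A: "group A" and finA: "finite (carrier A)" and B: "group B" and finB: "finite (carrier B)"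
    and x: "x \<in> carrier B" and c: "c \<in> carrier B"
  shows "(\<Sum>f\<in>carrier B \<rightarrow>\<^sub>E carrier A. \<phi> (base_pow A B f x (group.ord B x) c)) =
    card (carrier A) ^ (card (carrier B) - 1) * (\<Sum>a\<in>carrier A. \<phi> a)"
proof -
  interpret B: group B by (rule B)
  (* Q f does not depend on f c, so f c \<otimes> Q f is equidistributed over A as f varies. *)
  define Q where "Q f = base_pow A B f x (B.ord x - 1) (inv\<^bsub>B\<^esub> x \<otimes>\<^bsub>B\<^esub> c)" for f
  have ord_x: "B.ord x = Suc (B.ord x - 1)"
    using B.ord_ge_1[OF finB x] by simp
  have "base_pow A B f x (B.ord x) c = f c \<otimes>\<^bsub>A\<^esub> Q f" if "f \<in> carrier B \<rightarrow>\<^sub>E carrier A" for f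
    unfolding Q_def by (subst ord_x) (rule base_pow_Suc_left[OF A B that x c])
  then have "(\<Sum>f\<in>carrier B \<rightarrow>\<^sub>E carrier A. \<phi> (base_pow A B f x (B.ord x) c)) =
      (\<Sum>f\<in>carrier B \<rightarrow>\<^sub>E carrier A. \<phi> (f c \<otimes>\<^bsub>A\<^esub> Q f))"
    by (intro sum.cong) auto
  also have "\<dots> = (\<Sum>f\<in>carrier B \<rightarrow>\<^sub>E carrier A. \<phi> (f c))"
  proof (rule sum_PiE_eval_mult_indep[OF A c])
    show "Q f \<in> carrier A" if "f \<in> carrier B \<rightarrow>\<^sub>E carrier A" for f
      using base_pow_closed[OF A B that x] x c by (auto simp: Q_def PiE_iff)
    show "Q (f(c := a)) = Q f" for f a
      unfolding Q_def by (rule base_pow_upd_indep[OF B finB x c])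
  qed
  also have "\<dots> = card (carrier A) ^ (card (carrier B) - 1) * (\<Sum>a\<in>carrier A. \<phi> a)"
    by (rule sum_PiE_eval[OF finA finB c])
  finally show ?thesis .
qed

lemma sum_sq_ord_wreath_le:
  assumes A: "group A" and finA: "finite (carrier A)" and chain: "orders_dvd_chain A"
    and B: "group B" and finB: "finite (carrier B)"
  shows "(\<Sum>u\<in>carrier (wreath A B). group.ord (wreath A B) u ^ 2) \<le>
    (\<Sum>x\<in>carrier B. group.ord B x) * card (carrier B) * card (carrier A) ^ (card (carrier B) - 1) *
    (\<Sum>a\<in>carrier A. group.ord A a ^ 2)"
proof -
  interpret A: group A by (rule A)
  interpret B: group B by (rule B)
  interpret W: group "wreath A B" by (rule group_wreath[OF A B])
  let ?K = "carrier B \<rightarrow>\<^sub>E carrier A"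
  let ?F = "\<lambda>f x. base_pow A B f x (B.ord x)"
  let ?C = "card (carrier A) ^ (card (carrier B) - 1) * (\<Sum>a\<in>carrier A. A.ord a ^ 2)"
  have "(\<Sum>u\<in>carrier (wreath A B). W.ord u ^ 2) = (\<Sum>f\<in>?K. \<Sum>x\<in>carrier B. W.ord (f, x) ^ 2)"
    unfolding wreath_carrier by (simp add: sum.cartesian_product)
  also have "\<dots> = (\<Sum>x\<in>carrier B. \<Sum>f\<in>?K. W.ord (f, x) ^ 2)"
    by (rule sum.swap)
  also have "\<dots> \<le> (\<Sum>x\<in>carrier B. \<Sum>f\<in>?K. B.ord x * (\<Sum>c\<in>carrier B. A.ord (?F f x c) ^ 2))"
    by (intro sum_mono wreath_ord_sq_le[OF A finA chain B finB]) auto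
  also have "\<dots> = (\<Sum>x\<in>carrier B. B.ord x * (\<Sum>c\<in>carrier B. \<Sum>f\<in>?K. A.ord (?F f x c) ^ 2))"
    by (simp add: sum_distrib_left sum.swap[where A = ?K])
  also have "\<dots> = (\<Sum>x\<in>carrier B. B.ord x * (\<Sum>c\<in>carrier B. ?C))"
    by (intro sum.cong refl arg_cong2[where f = "(*)"] sum_base_pow_eval[OF A finA B finB])
  also have "\<dots> = (\<Sum>x\<in>carrier B. B.ord x) * card (carrier B) * ?C"
    by (simp add: sum_distrib_right mult.assoc)
  finally show ?thesis
    by (simp add: mult.assoc)
qed

lemma mean_sq_order_wreath_le:
  assumes A: "group A" and finA: "finite (carrier A)" and chain: "orders_dvd_chain A"
    and B: "group B" and finB: "finite (carrier B)"
  shows "mean_sq_order (wreath A B) \<le> real (\<Sum>x\<in>carrier B. group.ord B x) * mean_sq_order A"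
proof -
  interpret A: group A by (rule A)
  interpret B: group B by (rule B)
  define N where "N = real (card (carrier A))"
  define b where "b = card (carrier B)"
  define s where "s = real (\<Sum>x\<in>carrier B. B.ord x)"
  define T where "T = (\<Sum>a\<in>carrier A. real (A.ord a) ^ 2)"
  have N: "0 < N" and b: "0 < b"
    using finA finB A.one_closed B.one_closed by (auto simp: N_def b_def card_gt_0_iff)
  have sum_W: "(\<Sum>u\<in>carrier (wreath A B). real (group.ord (wreath A B) u) ^ 2) \<le> s * b * N ^ (b - 1) * T"
    using of_nat_mono[OF sum_sq_ord_wreath_le[OF A finA chain B finB], where 'a = real]
    unfolding s_def b_def N_def T_def by simp
  have card_W: "real (card (carrier (wreath A B))) = N * N ^ (b - 1) * b"
    using b by (simp add: card_wreath[OF finA finB] N_def b_def flip: power_Suc)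
  have "mean_sq_order (wreath A B) \<le> s * b * N ^ (b - 1) * T / (N * N ^ (b - 1) * b)"
    unfolding mean_sq_order_def card_W using sum_W N b by (intro divide_right_mono) auto
  also have "\<dots> = s * (T / N)"
    using N b by (simp add: field_simps)
  finally show ?thesis
    by (simp add: mean_sq_order_def s_def T_def N_def)
qed

lemma psi_nonneg: "0 \<le> psi A B"
  by (simp add: psi_def avg_order_def sum_nonneg)

lemma psi_sq_le:
  assumes A: "group A" and finA: "finite (carrier A)" and chain: "orders_dvd_chain A"
    and B: "group B" and finB: "finite (carrier B)"
  shows "psi A B ^ 2 \<le> real (card (carrier B)) * mean_sq_order A / real (max_order A) ^ 2"
proof -
  interpret A: group A by (rule A)
  interpret B: group B by (rule B)
  define b where "b = avg_order B"
  define m where "m = real (max_order A)"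
  define r where "r = real (card (carrier B)) * mean_sq_order A / m ^ 2"
  have b: "1 \<le> b" unfolding b_def by (rule B.avg_order_ge_1[OF finB])
  have m: "0 < m" unfolding m_def using A.max_order_pos[OF finA] by simp
  have "0 < card (carrier B)"
    using finB B.one_closed by (auto simp: card_gt_0_iff)
  then have sum_B: "(\<Sum>x\<in>carrier B. real (B.ord x)) = real (card (carrier B)) * b"
    by (simp add: b_def avg_order_def)
  have "psi A B ^ 2 = avg_order (wreath A B) ^ 2 / (m ^ 2 * b ^ 2)"
    by (simp add: psi_def b_def m_def power_divide power_mult_distrib)
  also have "\<dots> \<le> mean_sq_order (wreath A B) / (m ^ 2 * b ^ 2)"
    by (intro divide_right_mono avg_order_sq_le_mean_sq_order finite_wreath finA finB) simp
  also have "\<dots> \<le> real (card (carrier B)) * b * mean_sq_order A / (m ^ 2 * b ^ 2)"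
    using mean_sq_order_wreath_le[OF A finA chain B finB] by (intro divide_right_mono) (simp_all add: sum_B)
  also have "\<dots> = r / b"
    using m b by (simp add: r_def field_simps power2_eq_square)
  also have "\<dots> \<le> r / 1"
    using b mean_sq_order_nonneg[of A] by (intro divide_left_mono) (simp_all add: r_def)
  finally show ?thesis
    unfolding r_def m_def by simp
qed

lemma base_pow_indicator_one:
  assumes A: "group A" and B: "group B" and a: "a \<in> carrier A" and x: "x \<in> carrier B"
    and n: "1 \<le> n" "n \<le> group.ord B x"
  shows "base_pow A B (\<lambda>c\<in>carrier B. if c = \<one>\<^bsub>B\<^esub> then a else \<one>\<^bsub>A\<^esub>) x n \<one>\<^bsub>B\<^esub> = a"
  using n
proof (induction n)
  case (Suc n)
  interpret A: group A by (rule A)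
  interpret B: group B by (rule B)
  show ?case
  proof (cases "n = 0")
    case True
    then show ?thesis using a by simp
  next
    case False
    have "x [^]\<^bsub>B\<^esub> n \<noteq> \<one>\<^bsub>B\<^esub>"
      using False Suc.prems B.pow_eq_id[OF x, of n] by (auto dest: dvd_imp_le)
    then show ?thesis
      using Suc False x a by simp
  qed
qed simp

lemma wreath_ord_ge:
  assumes A: "group A" and finA: "finite (carrier A)" and B: "group B" and finB: "finite (carrier B)"
    and a: "a \<in> carrier A" and x: "x \<in> carrier B"
  shows "group.ord A a * group.ord B x \<le>
    group.ord (wreath A B) (\<lambda>c\<in>carrier B. if c = \<one>\<^bsub>B\<^esub> then a else \<one>\<^bsub>A\<^esub>, x)"
proof -
  interpret A: group A by (rule A)
  interpret B: group B by (rule B)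
  interpret W: group "wreath A B" by (rule group_wreath[OF A B])
  define \<delta> where "\<delta> = (\<lambda>c\<in>carrier B. if c = \<one>\<^bsub>B\<^esub> then a else \<one>\<^bsub>A\<^esub>)"
  have \<delta>: "\<delta> \<in> carrier B \<rightarrow>\<^sub>E carrier A" and \<delta>x: "(\<delta>, x) \<in> carrier (wreath A B)"
    using a x by (auto simp: \<delta>_def wreath_carrier)
  define k where "k = W.ord (\<delta>, x)"
  have k: "0 < k"
    using W.ord_ge_1[OF finite_wreath[OF finA finB] \<delta>x] by (simp add: k_def)
  have pow_k: "(\<delta>, x) [^]\<^bsub>wreath A B\<^esub> k = \<one>\<^bsub>wreath A B\<^esub>"
    using \<delta>x by (simp add: k_def)
  then have "x [^]\<^bsub>B\<^esub> k = \<one>\<^bsub>B\<^esub>"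
    by (simp add: wreath_pow wreath_one)
  then obtain j where j: "k = B.ord x * j"
    using B.pow_eq_id[OF x] by (auto elim: dvdE)
  have "base_pow A B \<delta> x (B.ord x) \<one>\<^bsub>B\<^esub> = a"
    unfolding \<delta>_def using B.ord_ge_1[OF finB x] by (intro base_pow_indicator_one[OF A B a x]) auto
  moreover have "(\<lambda>c\<in>carrier B. base_pow A B \<delta> x (B.ord x) c [^]\<^bsub>A\<^esub> j) = (\<lambda>c\<in>carrier B. \<one>\<^bsub>A\<^esub>)"
    using pow_k wreath_pow_ord_mult[OF A B \<delta> x, of j] by (simp only: j wreath_one prod.inject)
  then have "base_pow A B \<delta> x (B.ord x) \<one>\<^bsub>B\<^esub> [^]\<^bsub>A\<^esub> j = \<one>\<^bsub>A\<^esub>"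
    by (metis B.one_closed restrict_apply')
  ultimately have "a [^]\<^bsub>A\<^esub> j = \<one>\<^bsub>A\<^esub>"
    by simp
  then have "A.ord a \<le> j"
    using A.pow_eq_id[OF a] j k by (auto intro: dvd_imp_le)
  then show ?thesis
    using j by (simp add: k_def \<delta>_def)
qed

lemma max_order_wreath_ge:
  assumes A: "group A" and finA: "finite (carrier A)" and B: "group B" and finB: "finite (carrier B)"
  shows "max_order A * max_order B \<le> max_order (wreath A B)"
proof -
  interpret A: group A by (rule A)
  interpret B: group B by (rule B)
  interpret W: group "wreath A B" by (rule group_wreath[OF A B])
  obtain a where a: "a \<in> carrier A" "A.ord a = max_order A"
    using A.max_order_attained[OF finA] by blast
  obtain x where x: "x \<in> carrier B" "B.ord x = max_order B"
    using B.max_order_attained[OF finB] by blast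
  have "(\<lambda>c\<in>carrier B. if c = \<one>\<^bsub>B\<^esub> then a else \<one>\<^bsub>A\<^esub>, x) \<in> carrier (wreath A B)"
    using a x by (auto simp: wreath_carrier)
  then have "A.ord a * B.ord x \<le> max_order (wreath A B)"
    by (rule le_trans[OF wreath_ord_ge[OF A finA B finB a(1) x(1)]
          W.ord_le_max_order[OF finite_wreath[OF finA finB]]])
  with a x show ?thesis
    by simp
qed

lemma wreath_integer_mod_group_ratio_le:
  assumes p: "2 \<le> p" and G: "group G" and finG: "finite (carrier G)" and chain: "orders_dvd_chain G"
  defines "W \<equiv> wreath G (integer_mod_group p)"
  shows "mean_sq_order W / real (max_order W) ^ 2 \<le>
    real (1 + (p - 1) * p) / real p ^ 2 * (mean_sq_order G / real (max_order G) ^ 2)"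
proof -
  interpret G: group G by (rule G)
  let ?Z = "integer_mod_group p"
  interpret Z: group ?Z by simp
  have finZ: "finite (carrier ?Z)" and card_Z: "card (carrier ?Z) = p"
    using p by (simp_all add: carrier_integer_mod_group)
  have "mean_sq_order W \<le> real (\<Sum>x\<in>carrier ?Z. Z.ord x) * mean_sq_order G"
    unfolding W_def by (rule mean_sq_order_wreath_le[OF G finG chain Z.is_group finZ])
  also have "\<dots> \<le> real (1 + (p - 1) * p) * mean_sq_order G"
    using Z.sum_ord_le[OF finZ] card_Z mean_sq_order_nonneg[of G]
    by (intro mult_right_mono) (simp_all only: of_nat_le_iff)
  finally have ms: "mean_sq_order W \<le> real (1 + (p - 1) * p) * mean_sq_order G" .
  have "p \<le> max_order ?Z"
    using Z.ord_le_max_order[OF finZ, of 1] ord_integer_mod_group_1[of p] p by simp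
  then have "max_order G * p \<le> max_order W"
    unfolding W_def using max_order_wreath_ge[OF G finG Z.is_group finZ]
    by (meson mult_le_mono2 order_trans)
  then have m: "real p * real (max_order G) \<le> real (max_order W)"
    by (simp only: mult.commute of_nat_mult[symmetric] of_nat_le_iff)
  have m0: "0 < real (max_order G)"
    using G.max_order_pos[OF finG] by simp
  have "mean_sq_order W / real (max_order W) ^ 2 \<le>
      real (1 + (p - 1) * p) * mean_sq_order G / (real p * real (max_order G)) ^ 2"
    using ms m m0 p mean_sq_order_nonneg[of W]
    by (intro frac_le power_mono) simp_all
  also have "\<dots> = real (1 + (p - 1) * p) / real p ^ 2 * (mean_sq_order G / real (max_order G) ^ 2)"
    by (simp add: power_mult_distrib)
  finally show ?thesis .
qed

section \<open>Iterated wreath products\<close>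

lemma transport_carrier: "carrier (transport h G) = h ` carrier G"
  by (simp add: transport_def)

lemma transport_mult:
  "inj_on h (carrier G) \<Longrightarrow> a \<in> carrier G \<Longrightarrow> b \<in> carrier G \<Longrightarrow>
    h a \<otimes>\<^bsub>transport h G\<^esub> h b = h (a \<otimes>\<^bsub>G\<^esub> b)"
  by (simp add: transport_def the_inv_into_f_f)

lemma transport_one: "\<one>\<^bsub>transport h G\<^esub> = h \<one>\<^bsub>G\<^esub>"
  by (simp add: transport_def)

lemma card_transport: "inj_on h (carrier G) \<Longrightarrow> card (carrier (transport h G)) = card (carrier G)"
  by (simp add: transport_carrier card_image)

lemma group_transport:
  assumes G: "group G" and h: "inj_on h (carrier G)"
  shows "group (transport h G)"
proof -
  interpret G: group G by (rule G)
  show ?thesis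
  proof (rule groupI)
    fix u v assume "u \<in> carrier (transport h G)" "v \<in> carrier (transport h G)"
    then show "u \<otimes>\<^bsub>transport h G\<^esub> v \<in> carrier (transport h G)"
      using h by (auto simp: transport_carrier transport_mult)
  next
    show "\<one>\<^bsub>transport h G\<^esub> \<in> carrier (transport h G)"
      by (auto simp: transport_carrier transport_one)
  next
    fix u v w
    assume "u \<in> carrier (transport h G)" "v \<in> carrier (transport h G)" "w \<in> carrier (transport h G)"
    then show "u \<otimes>\<^bsub>transport h G\<^esub> v \<otimes>\<^bsub>transport h G\<^esub> w =
        u \<otimes>\<^bsub>transport h G\<^esub> (v \<otimes>\<^bsub>transport h G\<^esub> w)"
      using h by (auto simp: transport_carrier transport_mult G.m_assoc)
  next
    fix u assume "u \<in> carrier (transport h G)"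
    then show "\<one>\<^bsub>transport h G\<^esub> \<otimes>\<^bsub>transport h G\<^esub> u = u"
      using h by (auto simp: transport_carrier transport_mult transport_one)
  next
    fix u assume "u \<in> carrier (transport h G)"
    then obtain a where a: "a \<in> carrier G" "u = h a" by (auto simp: transport_carrier)
    then have "h (inv\<^bsub>G\<^esub> a) \<in> carrier (transport h G)"
      "h (inv\<^bsub>G\<^esub> a) \<otimes>\<^bsub>transport h G\<^esub> u = \<one>\<^bsub>transport h G\<^esub>"
      using h by (auto simp: transport_carrier transport_mult transport_one)
    then show "\<exists>v\<in>carrier (transport h G). v \<otimes>\<^bsub>transport h G\<^esub> u = \<one>\<^bsub>transport h G\<^esub>"
      by blast
  qed
qed

lemma transport_ord:
  assumes G: "group G" and h: "inj_on h (carrier G)" and a: "a \<in> carrier G"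
  shows "group.ord (transport h G) (h a) = group.ord G a"
proof -
  interpret G: group G by (rule G)
  interpret T: group "transport h G" by (rule group_transport[OF G h])
  have pow: "h a [^]\<^bsub>transport h G\<^esub> n = h (a [^]\<^bsub>G\<^esub> n)" for n :: nat
    by (induction n) (simp_all add: transport_one transport_mult h a)
  have "h a [^]\<^bsub>transport h G\<^esub> n = \<one>\<^bsub>transport h G\<^esub> \<longleftrightarrow> a [^]\<^bsub>G\<^esub> n = \<one>\<^bsub>G\<^esub>"
    for n :: nat
    using h a by (simp add: pow transport_one inj_on_eq_iff)
  then show ?thesis
    using T.ord_unique a G.pow_eq_id[OF a] by (simp add: transport_carrier)
qed

lemma max_order_transport:
  assumes G: "group G" and h: "inj_on h (carrier G)"
  shows "max_order (transport h G) = max_order G"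
proof -
  have "group.ord (transport h G) ` carrier (transport h G) = group.ord G ` carrier G"
    by (force simp: transport_carrier transport_ord[OF G h] image_image)
  then show ?thesis
    by (simp add: max_order_def)
qed

lemma mean_sq_order_transport:
  assumes G: "group G" and h: "inj_on h (carrier G)"
  shows "mean_sq_order (transport h G) = mean_sq_order G"
  by (simp add: mean_sq_order_def transport_carrier card_image[OF h] sum.reindex[OF h]
      transport_ord[OF G h])

lemma inj_on_Node: "inj_on (\<lambda>(f, k). Node f k) S"
  by (auto simp: inj_on_def)

lemma iter_wreath_p_group:
  assumes p: "0 < p" and A: "group A" and card_A: "card (carrier A) = p ^ k"
  shows "group (iter_wreath A p n) \<and> finite (carrier (iter_wreath A p n)) \<and>
    (\<exists>k. card (carrier (iter_wreath A p n)) = p ^ k)"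
proof (induction n)
  case 0
  have inj: "inj_on Base (carrier A)"
    by (simp add: inj_on_def)
  have card_0: "card (carrier (iter_wreath A p 0)) = p ^ k"
    using card_transport[OF inj] card_A by simp
  moreover have "finite (carrier (iter_wreath A p 0))"
    using card_0 p by (intro card_ge_0_finite) simp
  ultimately show ?case
    using group_transport[OF A inj] by auto
next
  case (Suc n)
  let ?G = "iter_wreath A p n"
  let ?Z = "integer_mod_group p"
  obtain k where G: "group ?G" and finG: "finite (carrier ?G)" and k: "card (carrier ?G) = p ^ k"
    using Suc by blast
  have finZ: "finite (carrier ?Z)" and card_Z: "card (carrier ?Z) = p"
    using p by (simp_all add: carrier_integer_mod_group)
  have "group (iter_wreath A p (Suc n))"
    using group_transport[OF group_wreath[OF G group_integer_mod_group] inj_on_Node] by simp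
  moreover have "finite (carrier (iter_wreath A p (Suc n)))"
    using finite_wreath[OF finG finZ] by (simp add: transport_carrier)
  moreover have "card (carrier (iter_wreath A p (Suc n))) = card (carrier (wreath ?G ?Z))"
    unfolding iter_wreath.simps by (rule card_transport[OF inj_on_Node])
  then have "card (carrier (iter_wreath A p (Suc n))) = p ^ (k * p + 1)"
    using card_wreath[OF finG finZ] k card_Z by (simp add: power_mult)
  ultimately show ?case
    by blast
qed

lemma iter_wreath_ratio_le:
  assumes p: "prime p" and A: "group A" and card_A: "card (carrier A) = p ^ k"
  shows "mean_sq_order (iter_wreath A p n) / real (max_order (iter_wreath A p n)) ^ 2 \<le>
    (real (1 + (p - 1) * p) / real p ^ 2) ^ n"
proof (induction n)
  case 0
  let ?G = "iter_wreath A p 0"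
  have G: "group ?G" and finG: "finite (carrier ?G)"
    using iter_wreath_p_group[OF prime_gt_0_nat[OF p] A card_A] by blast+
  then show ?case
    using group.mean_sq_order_le_max_order[OF G finG] group.max_order_pos[OF G finG] by simp
next
  case (Suc n)
  let ?G = "iter_wreath A p n"
  let ?W = "wreath ?G (integer_mod_group p)"
  obtain k' where G: "group ?G" and finG: "finite (carrier ?G)" and k': "card (carrier ?G) = p ^ k'"
    using iter_wreath_p_group[OF prime_gt_0_nat[OF p] A card_A] by blast
  have W: "group ?W"
    by (simp add: group_wreath[OF G])
  have "mean_sq_order (iter_wreath A p (Suc n)) / real (max_order (iter_wreath A p (Suc n))) ^ 2 =
      mean_sq_order ?W / real (max_order ?W) ^ 2"
    by (simp add: mean_sq_order_transport[OF W inj_on_Node] max_order_transport[OF W inj_on_Node])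
  also have "\<dots> \<le> real (1 + (p - 1) * p) / real p ^ 2 * (mean_sq_order ?G / real (max_order ?G) ^ 2)"
    using prime_ge_2_nat[OF p] group.orders_dvd_chain_if_card_prime_power[OF G p k']
    by (intro wreath_integer_mod_group_ratio_le G finG)
  also have "\<dots> \<le> real (1 + (p - 1) * p) / real p ^ 2 * (real (1 + (p - 1) * p) / real p ^ 2) ^ n"
    by (intro mult_left_mono Suc.IH) simp
  finally show ?case
    by simp
qed

lemma psi_iter_wreath_sq_le:
  assumes p: "prime p" and A: "group A" and card_A: "card (carrier A) = p ^ k"
    and B: "group B" and finB: "finite (carrier B)"
  shows "psi (iter_wreath A p n) B ^ 2 \<le>
    real (card (carrier B)) * (real (1 + (p - 1) * p) / real p ^ 2) ^ n"
proof -
  let ?G = "iter_wreath A p n"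
  obtain k' where G: "group ?G" and finG: "finite (carrier ?G)" and k': "card (carrier ?G) = p ^ k'"
    using iter_wreath_p_group[OF prime_gt_0_nat[OF p] A card_A] by blast
  have "psi ?G B ^ 2 \<le> real (card (carrier B)) * (mean_sq_order ?G / real (max_order ?G) ^ 2)"
    using psi_sq_le[OF G finG group.orders_dvd_chain_if_card_prime_power[OF G p k'] B finB] by simp
  also have "\<dots> \<le> real (card (carrier B)) * (real (1 + (p - 1) * p) / real p ^ 2) ^ n"
    by (intro mult_left_mono iter_wreath_ratio_le[OF p A card_A]) simp
  finally show ?thesis .
qed

theorem corollary5p2:
  fixes A :: "('a, 'c) monoid_scheme" and B :: "('b, 'd) monoid_scheme" and p :: nat
  assumes "prime p"
    and "group A" and "finite (carrier A)" and "\<exists>k. card (carrier A) = p ^ k" and "card (carrier A) > 1"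
    and "group B" and "finite (carrier B)" and "\<exists>k. card (carrier B) = p ^ k" and "card (carrier B) > 1"
  shows "(\<lambda>n. psi (iter_wreath A p n) B) \<longlonglongrightarrow> 0"
proof -
  note p = assms(1) and A = assms(2) and B = assms(6) and finB = assms(7)
  obtain k where card_A: "card (carrier A) = p ^ k"
    using assms(4) by blast
  define \<theta> where "\<theta> = real (1 + (p - 1) * p) / real p ^ 2"
  have "real (1 + (p - 1) * p) < real p ^ 2"
    unfolding of_nat_power[symmetric] of_nat_less_iff
    using prime_gt_1_nat[OF p] by (cases p) (simp_all add: power2_eq_square)
  then have \<theta>: "0 \<le> \<theta>" "\<theta> < 1"
    unfolding \<theta>_def by (auto simp: divide_less_eq_1)
  have bound: "psi (iter_wreath A p n) B \<le> sqrt (card (carrier B)) * sqrt \<theta> ^ n" for n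
    using real_le_rsqrt[OF psi_iter_wreath_sq_le[OF p A card_A B finB, folded \<theta>_def]]
    by (simp add: real_sqrt_mult real_sqrt_power)
  have lim: "(\<lambda>n. sqrt (card (carrier B)) * sqrt \<theta> ^ n) \<longlonglongrightarrow> 0"
    using \<theta> by (intro tendsto_mult_right_zero LIMSEQ_power_zero) simp_all
  show ?thesis
    by (rule tendsto_sandwich[OF _ _ tendsto_const lim]) (simp_all add: psi_nonneg bound)
qed

end
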